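(* For every integer $n\ge1$, $$\sum_{k=1}^n\frac{\binom{2n}{k}\left(\frac{1}{k+1}-10\right)}{4^k}=-\frac{2n+1}{n+1}\cdot\frac{\binom{2n}{n}}{4^n}+\frac{(18n+5)2^{4n}-(16n+4)5^{2n}}{(2n+1)2^{4n}}-\frac{3(4n+1)}{2(2n+1)}\cdot\frac{5^{2n}}{2^{4n}}\sum_{k=1}^n\binom{2k}{k}\left(\frac{4}{25}\right)^k.$$ *)

theory Defs
  imports Complex_Main
begin

end

theory Submission
  imports Defs
begin

text \<open>
  Let \<open>H\<^sub>n = \<Sum>k\<le>n. C(2n,k) / 4\<^sup>k\<close> and \<open>G\<^sub>n = \<Sum>k\<le>n. C(2n,k) / ((k+1) 4\<^sup>k)\<close>, so that the
  left-hand side is \<open>G\<^sub>n - 10 H\<^sub>n + 9\<close>. Two applications of Pascal's rule to the truncated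
  rows give \<open>H\<^sub>n\<^sub>+\<^sub>1 = (25/16) H\<^sub>n + ((2n+1)/(n+1) - 5/4) C(2n,n) / 4\<^sup>n\<^sup>+\<^sup>1\<close>, a first-order
  recurrence whose solution is
  \<open>H\<^sub>n = (25/16)\<^sup>n (4/5 + 3/10 \<Sum>k=1..n. C(2k,k) (4/25)\<^sup>k) + C(2n,n) / (5 \<cdot> 4\<^sup>n)\<close>.
  The absorption identity \<open>C(2n,k) / (k+1) = C(2n+1,k+1) / (2n+1)\<close> turns \<open>G\<^sub>n\<close> into a truncated
  row sum of row \<open>2n+1\<close>, which Pascal's rule again expresses through \<open>H\<^sub>n\<close>.
\<close>

definition binomial_partial_sum :: "real \<Rightarrow> nat \<Rightarrow> nat \<Rightarrow> real" where
  "binomial_partial_sum x m j = (\<Sum>k\<le>j. real (m choose k) * x ^ k)"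

lemma binomial_partial_sum_0 [simp]: "binomial_partial_sum x m 0 = 1"
  by (simp add: binomial_partial_sum_def)

lemma binomial_partial_sum_Suc:
  "binomial_partial_sum x m (Suc j) = binomial_partial_sum x m j + real (m choose Suc j) * x ^ Suc j"
  by (simp add: binomial_partial_sum_def)

lemma binomial_partial_sum_Suc_Suc:
  "binomial_partial_sum x (Suc m) (Suc j) = binomial_partial_sum x m (Suc j) + x * binomial_partial_sum x m j"
proof -
  have "binomial_partial_sum x (Suc m) (Suc j)
      = 1 + (\<Sum>k\<le>j. real (m choose Suc k) * x ^ Suc k) + (\<Sum>k\<le>j. real (m choose k) * x ^ Suc k)"
    unfolding binomial_partial_sum_def sum.atMost_Suc_shift by (simp add: sum.distrib distrib_right)
  also have "1 + (\<Sum>k\<le>j. real (m choose Suc k) * x ^ Suc k) = binomial_partial_sum x m (Suc j)"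
    unfolding binomial_partial_sum_def sum.atMost_Suc_shift by simp
  also have "(\<Sum>k\<le>j. real (m choose k) * x ^ Suc k) = x * binomial_partial_sum x m j"
    by (simp add: binomial_partial_sum_def sum_distrib_left mult_ac)
  finally show ?thesis .
qed

lemma binomial_partial_sum_odd_row:
  "binomial_partial_sum x (Suc (2*n)) n
     = (1 + x) * binomial_partial_sum x (2*n) n - real (2*n choose n) * x ^ Suc n"
proof (cases n)
  case (Suc j)
  then show ?thesis
    using binomial_partial_sum_Suc_Suc[of x "2*n" j] binomial_partial_sum_Suc[of x "2*n" j]
    by (simp add: algebra_simps)
qed simp

lemma Suc_times_central_binomial:
  "(real n + 1) * real (Suc (2*n) choose Suc n) = (2 * real n + 1) * real (2*n choose n)"
proof -
  have "real (Suc n) * real (Suc (2*n) choose Suc n) = real (Suc (2*n)) * real (2*n choose n)"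
    by (metis of_nat_mult Suc_times_binomial)
  then show ?thesis by (simp add: algebra_simps)
qed

lemma central_binomial_Suc:
  "real (2 * Suc n choose Suc n) = 2 * real (Suc (2*n) choose Suc n)"
proof -
  have "(2 * Suc n choose Suc n) = (Suc (2*n) choose n) + (Suc (2*n) choose Suc n)"
    by simp
  moreover have "(Suc (2*n) choose n) = (Suc (2*n) choose Suc n)"
    using binomial_symmetric[of n "Suc (2*n)"] by simp
  ultimately show ?thesis by simp
qed

lemma central_binomial_partial_sum_Suc:
  "binomial_partial_sum x (2 * Suc n) (Suc n)
     = (1 + x)^2 * binomial_partial_sum x (2*n) n
       + (real (Suc (2*n) choose Suc n) - (1 + x) * real (2*n choose n)) * x ^ Suc n"
proof -
  let ?H = "binomial_partial_sum x (2*n) n" and ?K = "binomial_partial_sum x (Suc (2*n)) n"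
  have "binomial_partial_sum x (2 * Suc n) (Suc n) = (1 + x) * ?K + real (Suc (2*n) choose Suc n) * x ^ Suc n"
    using binomial_partial_sum_Suc_Suc[of x "Suc (2*n)" n] binomial_partial_sum_Suc[of x "Suc (2*n)" n]
    by (simp add: algebra_simps)
  also have "?K = (1 + x) * ?H - real (2*n choose n) * x ^ Suc n"
    by (rule binomial_partial_sum_odd_row)
  finally show ?thesis by (simp add: algebra_simps power2_eq_square)
qed

lemma central_binomial_partial_sum_quarter:
  "binomial_partial_sum (1/4) (2*n) n
     = (25/16)^n * (4/5 + 3/10 * (\<Sum>k=1..n. real (2*k choose k) * (4/25)^k))
       + real (2*n choose n) * (1/4)^n / 5"
proof (induction n)
  case (Suc n)
  let ?S = "\<Sum>k=1..n. real (2*k choose k) * (4/25::real)^k"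
  define C where "C = real (2*n choose n)"
  define C' where "C' = real (Suc (2*n) choose Suc n)"
  have scale: "(25/16::real)^Suc n * (4/25)^Suc n = (1/4)^Suc n"
    by (simp flip: power_mult_distrib)
  have "binomial_partial_sum (1/4) (2 * Suc n) (Suc n)
      = 25/16 * ((25/16)^n * (4/5 + 3/10 * ?S) + C * (1/4)^n / 5) + (C' - 5/4 * C) * (1/4)^Suc n"
    using central_binomial_partial_sum_Suc[of "1/4" n] Suc.IH by (simp add: C_def C'_def power2_eq_square)
  also have "\<dots> = (25/16)^Suc n * (4/5 + 3/10 * (?S + 2 * C' * (4/25)^Suc n)) + 2 * C' * (1/4)^Suc n / 5"
    using scale by (simp add: field_simps)
  finally show ?case
    unfolding C'_def central_binomial_Suc[symmetric] by simp
qed simp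

lemma sum_binomial_div_Suc:
  "(real m + 1) * (\<Sum>k\<le>j. real (m choose k) / (real k + 1) * x ^ Suc k)
     = binomial_partial_sum x (Suc m) (Suc j) - 1"
proof -
  have absorb: "(real m + 1) * (real (m choose k) / (real k + 1) * x ^ Suc k) = real (Suc m choose Suc k) * x ^ Suc k"
    for k
  proof -
    have "real (Suc k) * real (Suc m choose Suc k) = real (Suc m) * real (m choose k)"
      by (metis of_nat_mult Suc_times_binomial)
    then show ?thesis by (simp add: field_simps del: binomial_Suc_Suc)
  qed
  show ?thesis
    unfolding sum_distrib_left absorb binomial_partial_sum_def sum.atMost_Suc_shift by simp
qed

lemma central_sum_binomial_div_Suc:
  "(2 * real n + 1) * (\<Sum>k\<le>n. real (2*n choose k) / (real k + 1) * x ^ Suc k)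
     = (1 + x) * binomial_partial_sum x (2*n) n
       + (real (Suc (2*n) choose Suc n) - real (2*n choose n)) * x ^ Suc n - 1"
  using sum_binomial_div_Suc[of "2*n" x n] binomial_partial_sum_odd_row[of x n]
    binomial_partial_sum_Suc[of x "Suc (2*n)" n]
  by (simp add: algebra_simps)

lemma central_sum_binomial_div_Suc_quarter:
  "(2 * real n + 1) * (\<Sum>k\<le>n. real (2*n choose k) / (real k + 1) / 4 ^ k)
     = 5 * binomial_partial_sum (1/4) (2*n) n + real n / (real n + 1) * real (2*n choose n) / 4 ^ n - 4"
proof -
  define T where "T = (\<Sum>k\<le>n. real (2*n choose k) / (real k + 1) * (1/4::real) ^ Suc k)"
  define H where "H = binomial_partial_sum (1/4) (2*n) n"
  define C where "C = real (2*n choose n)"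
  define C' where "C' = real (Suc (2*n) choose Suc n)"
  have rescale: "(\<Sum>k\<le>n. real (2*n choose k) / (real k + 1) / 4 ^ k) = 4 * T"
    by (simp add: T_def sum_distrib_left power_one_over)
  have T: "(2 * real n + 1) * T = (1 + 1/4) * H + (C' - C) * (1/4) ^ Suc n - 1"
    unfolding T_def H_def C_def C'_def by (rule central_sum_binomial_div_Suc)
  have C': "C' - C = real n / (real n + 1) * C"
    using Suc_times_central_binomial[of n] by (simp add: C_def C'_def field_simps del: binomial_Suc_Suc)
  have "(2 * real n + 1) * (4 * T) = 5 * H + (C' - C) * (4 * (1/4) ^ Suc n) - 4"
    unfolding mult.left_commute[of _ 4] T by (simp add: algebra_simps)
  also have "4 * (1/4::real) ^ Suc n = 1 / 4 ^ n"
    by (simp add: power_one_over)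
  finally show ?thesis
    unfolding rescale H_def[symmetric] C_def[symmetric] C' by simp
qed

text \<open>The identity also holds for \<open>n = 0\<close>.\<close>

theorem mainTheorem14:
  fixes n :: nat
  assumes "n \<ge> 1"
  shows "(\<Sum>k=1..n. real (2*n choose k) * (1 / (real k + 1) - 10) / 4 ^ k)
    = - ((2 * real n + 1) / (real n + 1)) * (real (2*n choose n) / 4 ^ n)
      + ((18 * real n + 5) * 2 ^ (4*n) - (16 * real n + 4) * 5 ^ (2*n)) / ((2 * real n + 1) * 2 ^ (4*n))
      - (3 * (4 * real n + 1)) / (2 * (2 * real n + 1)) * (5 ^ (2*n) / 2 ^ (4*n))
        * (\<Sum>k=1..n. real (2*k choose k) * (4/25) ^ k)"
proof -
  define H where "H = binomial_partial_sum (1/4) (2*n) n"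
  define G where "G = (\<Sum>k\<le>n. real (2*n choose k) / (real k + 1) / 4 ^ k)"
  define S where "S = (\<Sum>k=1..n. real (2*k choose k) * (4/25::real) ^ k)"
  define c :: real where "c = real (2*n choose n) / 4 ^ n"
  define w :: real where "w = 5 ^ (2*n) / 2 ^ (4*n)"
  have "(\<Sum>k\<le>n. real (2*n choose k) * (1 / (real k + 1) - 10) / 4 ^ k) = G - 10 * H"
    by (simp add: G_def H_def binomial_partial_sum_def power_one_over diff_divide_distrib
        right_diff_distrib sum_subtractf sum_distrib_left mult_ac)
  then have lhs: "(\<Sum>k=1..n. real (2*n choose k) * (1 / (real k + 1) - 10) / 4 ^ k) = G - 10 * H + 9"
    by (simp add: atMost_atLeast0 sum.atLeast_Suc_atMost)
  have G: "G = (5 * H + real n / (real n + 1) * c - 4) / (2 * real n + 1)"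
    using central_sum_binomial_div_Suc_quarter[of n]
    by (simp add: G_def H_def c_def field_simps add_pos_nonneg)
  have "(25/16::real) ^ n = w"
    by (simp add: w_def power_mult power_divide)
  then have H: "H = w * (4/5 + 3/10 * S) + c / 5"
    using central_binomial_partial_sum_quarter[of n] by (simp add: H_def S_def c_def power_one_over)
  have w: "((18 * real n + 5) * 2 ^ (4*n) - (16 * real n + 4) * 5 ^ (2*n)) / ((2 * real n + 1) * 2 ^ (4*n))
      = (18 * real n + 5 - (16 * real n + 4) * w) / (2 * real n + 1)"
    unfolding w_def by (simp add: diff_divide_distrib)
  \<comment> \<open>\<open>algebra\<close> works in the ideal generated by these, which clears both denominators\<close>
  have "(real n + 1) * inverse (real n + 1) = 1" "(2 * real n + 1) * inverse (2 * real n + 1) = 1"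
    by (simp_all add: add_pos_nonneg)
  then show ?thesis
    unfolding lhs w G H c_def[symmetric] w_def[symmetric] S_def[symmetric]
    unfolding divide_inverse inverse_mult_distrib by algebra
qed

end
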